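(* Let $V>0$, $G_o>0$, $\ell>0$ be constants and set $\rho=V/G_o$. Consider the system on $\{r>0\}$ $$\dot r = -V\cos\psi,\qquad \dot\psi=\Big[\frac1r-\frac1\rho\exp\!\Big(-\frac r\ell\Big)\Big]V\sin\psi .$$ If $\ell>\rho e$, the system has exactly four equilibria (with $\psi$ taken modulo $2\pi$), namely $(r^{*},\pm\pi/2)$ and $(r^{**},\pm\pi/2)$ with $$r^{*}=-\ell\,W_{-1}\!\Big(-\frac{\rho}{\ell}\Big),\qquad r^{**}=-\ell\,W_{0}\!\Big(-\frac{\rho}{\ell}\Big);$$ the linearization at $(r^{*},\pm\pi/2)$ has a pair of nonzero real eigenvalues of opposite sign (saddle type), while the linearization at $(r^{**},\pm\pi/2)$ has a pair of nonzero purely imaginary eigenvalues (center type). If $\ell<\rho e$, the system has no equilibria.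
   Context: This system models a nonholonomic mobile sensor moving at constant speed $V$ in a radially symmetric signal field $f(r,t)=2e^{-r/\ell}\cos(r-t)$ from a source at the origin, with turning gain proportional to the signal's spectral magnitude, $G=G_o e^{-r/\ell}$. Here $r$ is the distance from the source and $\psi$ is the angle between the direction from the sensor to the source and the sensor's heading. $W_0$ and $W_{-1}$ denote the principal and lower real branches of the Lambert W function on $[-1/e,0)$. *)

theory Defs
  imports "HOL-Analysis.Analysis"
begin

definition LambertW0 :: "real \<Rightarrow> real" where
  "LambertW0 x = (THE w. -1 \<le> w \<and> w * exp w = x)"

definition LambertWm1 :: "real \<Rightarrow> real" where
  "LambertWm1 x = (THE w. w \<le> -1 \<and> w * exp w = x)"

definition rdot :: "real \<Rightarrow> real \<Rightarrow> real \<Rightarrow> real" where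
  "rdot V r \<psi> = - V * cos \<psi>"

definition psidot :: "real \<Rightarrow> real \<Rightarrow> real \<Rightarrow> real \<Rightarrow> real \<Rightarrow> real" where
  "psidot V Go l r \<psi> = (1 / r - (1 / (V / Go)) * exp (- r / l)) * V * sin \<psi>"

text \<open>Equilibria with psi taken modulo 2 pi (representatives in (-pi, pi]).\<close>
definition equilibria :: "real \<Rightarrow> real \<Rightarrow> real \<Rightarrow> (real \<times> real) set" where
  "equilibria V Go l = {(r, \<psi>). r > 0 \<and> - pi < \<psi> \<and> \<psi> \<le> pi \<and>
      rdot V r \<psi> = 0 \<and> psidot V Go l r \<psi> = 0}"

definition jac :: "real \<Rightarrow> real \<Rightarrow> real \<Rightarrow> real \<Rightarrow> real \<Rightarrow> real \<times> real \<times> real \<times> real" where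
  "jac V Go l r \<psi> =
     (deriv (\<lambda>x. rdot V x \<psi>) r, deriv (\<lambda>y. rdot V r y) \<psi>,
      deriv (\<lambda>x. psidot V Go l x \<psi>) r, deriv (\<lambda>y. psidot V Go l r y) \<psi>)"

definition lin_eigenvalues :: "real \<Rightarrow> real \<Rightarrow> real \<Rightarrow> real \<Rightarrow> real \<Rightarrow> complex set" where
  "lin_eigenvalues V Go l r \<psi> =
     (case jac V Go l r \<psi> of (a, b, c, d) \<Rightarrow>
        {z. (of_real a - z) * (of_real d - z) - of_real b * of_real c = 0})"

end

theory Submission
  imports Defs "HOL-Real_Asymp.Real_Asymp"
begin

(* An equilibrium needs cos psi = 0, i.e. psi = +-pi/2, and then 1/r = exp(-r/l)/rho, which for
   w = -r/l reads w e^w = -rho/l.  The map w e^w decreases on (-inf,-1], increases on [-1,inf)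
   and has minimum -1/e at w = -1, so there are two solutions W_{-1}(-rho/l) < -1 < W_0(-rho/l)
   when -rho/l > -1/e, and none when -rho/l < -1/e.  At an equilibrium the Jacobian is
   antidiagonal, so its eigenvalues satisfy lambda^2 = V^2 (r - l) / (r^2 l): a real pair of
   opposite signs at r* > l, a purely imaginary pair at r** < l. *)

lemma DERIV_times_exp_self:
  "((\<lambda>w. w * exp w) has_real_derivative (1 + x) * exp x) (at (x::real))"
  by (auto intro!: derivative_eq_intros simp: algebra_simps)

lemma isCont_times_exp_self: "isCont (\<lambda>w. w * exp w) (x::real)"
  by (intro continuous_intros)

lemma times_exp_self_strict_mono_on: "strict_mono_on {-1..} (\<lambda>w::real. w * exp w)"
proof (rule strict_mono_onI)
  fix a b :: real
  assume "a \<in> {-1..}" "a < b"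
  show "a * exp a < b * exp b"
  proof (rule DERIV_pos_imp_increasing_open[OF \<open>a < b\<close>])
    fix x assume "a < x"
    then show "\<exists>y. ((\<lambda>w. w * exp w) has_real_derivative y) (at x) \<and> y > 0"
      using \<open>a \<in> {-1..}\<close> DERIV_times_exp_self by fastforce
  qed (intro continuous_intros)
qed

lemma times_exp_self_strict_antimono_on: "strict_antimono_on {..-1} (\<lambda>w::real. w * exp w)"
proof (rule monotone_onI)
  fix a b :: real
  assume "b \<in> {..-1}" "a < b"
  show "b * exp b < a * exp a"
  proof (rule DERIV_neg_imp_decreasing_open[OF \<open>a < b\<close>])
    fix x assume "x < b"
    then have "(1 + x) * exp x < 0"
      using \<open>b \<in> {..-1}\<close> by (simp add: mult_less_0_iff)
    then show "\<exists>y. ((\<lambda>w. w * exp w) has_real_derivative y) (at x) \<and> y < 0"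
      using DERIV_times_exp_self by blast
  qed (intro continuous_intros)
qed

lemma times_exp_self_ge: "- exp (-1) \<le> w * exp (w::real)"
proof (cases "w \<le> -1")
  case True
  then show ?thesis
    using monotone_onD[OF times_exp_self_strict_antimono_on, of w "-1"] by fastforce
next
  case False
  then show ?thesis
    using monotone_onD[OF times_exp_self_strict_mono_on, of "-1" w] by fastforce
qed

lemma times_exp_self_surj_ge:
  assumes "- exp (-1) \<le> x"
  obtains w :: real where "-1 \<le> w" "w * exp w = x"
proof -
  have "max 0 x \<le> max 0 x * exp (max 0 x)"
    by (cases "x \<le> 0") auto
  then have "\<exists>w\<ge>-1. w \<le> max 0 x \<and> w * exp w = x"
    using assms isCont_times_exp_self by (intro IVT) auto
  then show ?thesis using that by blast
qed

lemma times_exp_self_surj_le: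
  assumes "- exp (-1) \<le> x" "x < 0"
  obtains w :: real where "w \<le> -1" "w * exp w = x"
proof -
  have "((\<lambda>w::real. w * exp w) \<longlongrightarrow> 0) at_bot" by real_asymp
  then have "\<forall>\<^sub>F w in at_bot. x < w * exp w \<and> w \<le> -1"
    using assms(2) by (intro eventually_conj order_tendstoD(1) eventually_le_at_bot)
  then obtain a where "x < a * exp a" "a \<le> -1"
    using eventually_happens'[OF trivial_limit_at_bot_linorder] by blast
  then have "\<exists>w\<ge>a. w \<le> -1 \<and> w * exp w = x"
    using assms isCont_times_exp_self by (intro IVT2) auto
  then show ?thesis using that by blast
qed

lemma LambertW0_eqI:
  assumes "-1 \<le> w"
  shows "LambertW0 (w * exp w) = w"
  unfolding LambertW0_def
proof (rule the_equality)
  fix v assume v: "-1 \<le> v \<and> v * exp v = w * exp w"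
  show "v = w"
    by (rule inj_onD[OF strict_mono_on_imp_inj_on[OF times_exp_self_strict_mono_on]])
      (use v assms in auto)
qed (use assms in simp)

lemma LambertWm1_eqI:
  assumes "w \<le> -1"
  shows "LambertWm1 (w * exp w) = w"
  unfolding LambertWm1_def
proof (rule the_equality)
  fix v assume v: "v \<le> -1 \<and> v * exp v = w * exp w"
  note antimono = monotone_onD[OF times_exp_self_strict_antimono_on]
  show "v = w"
  proof (rule linorder_cases[of v w])
    assume "v < w"
    then show ?thesis using antimono[of v w] v assms by simp
  next
    assume "w < v"
    then show ?thesis using antimono[of w v] v assms by simp
  qed
qed (use assms in simp)

lemma LambertW0_spec:
  assumes "- exp (-1) \<le> x"
  shows "-1 \<le> LambertW0 x" "LambertW0 x * exp (LambertW0 x) = x"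
proof -
  obtain w where "-1 \<le> w" "w * exp w = x"
    using times_exp_self_surj_ge[OF assms] .
  moreover from this have "LambertW0 x = w" using LambertW0_eqI by metis
  ultimately show "-1 \<le> LambertW0 x" "LambertW0 x * exp (LambertW0 x) = x" by simp_all
qed

lemma LambertWm1_spec:
  assumes "- exp (-1) \<le> x" "x < 0"
  shows "LambertWm1 x \<le> -1" "LambertWm1 x * exp (LambertWm1 x) = x"
proof -
  obtain w where "w \<le> -1" "w * exp w = x"
    using times_exp_self_surj_le[OF assms] .
  moreover from this have "LambertWm1 x = w" using LambertWm1_eqI by metis
  ultimately show "LambertWm1 x \<le> -1" "LambertWm1 x * exp (LambertWm1 x) = x" by simp_all
qed

lemma LambertW0_gt:
  assumes "- exp (-1) < x"
  shows "-1 < LambertW0 x"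
proof -
  have "LambertW0 x \<noteq> -1" using LambertW0_spec(2)[of x] assms by auto
  with LambertW0_spec(1)[of x] assms show ?thesis by linarith
qed

lemma LambertWm1_less:
  assumes "- exp (-1) < x" "x < 0"
  shows "LambertWm1 x < -1"
proof -
  have "LambertWm1 x \<noteq> -1" using LambertWm1_spec(2)[of x] assms by auto
  with LambertWm1_spec(1)[of x] assms show ?thesis by linarith
qed

lemma times_exp_self_eq_iff_LambertW:
  assumes "- exp (-1) < x" "x < 0"
  shows "w * exp w = x \<longleftrightarrow> w = LambertWm1 x \<or> w = LambertW0 x"
proof
  assume "w * exp w = x"
  then show "w = LambertWm1 x \<or> w = LambertW0 x"
    using LambertWm1_eqI[of w] LambertW0_eqI[of w] by force
qed (use LambertWm1_spec[of x] LambertW0_spec[of x] assms in auto)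

lemma cos_eq_0_iff_half_pi:
  assumes "- pi < \<psi>" "\<psi> \<le> pi"
  shows "cos \<psi> = 0 \<longleftrightarrow> \<psi> = pi/2 \<or> \<psi> = - pi/2"
proof
  assume "cos \<psi> = 0"
  then obtain n :: int where n: "\<psi> = n * pi + pi/2"
    using cos_zero_iff_int2 by blast
  have "pi * -1 < pi * (n + 1/2)" "pi * (n + 1/2) \<le> pi * 1"
    using assms unfolding n by (simp_all add: algebra_simps)
  then have "-1 < n + 1/2" "n + 1/2 \<le> 1"
    by (simp_all only: mult_less_cancel_left_pos[OF pi_gt_zero] mult_le_cancel_left_pos[OF pi_gt_zero])
  then have "n = -1 \<or> n = 0" by linarith
  then show "\<psi> = pi/2 \<or> \<psi> = - pi/2" using n by auto
qed (elim disjE; hypsubst; simp)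

lemma mem_equilibria_iff:
  assumes "V \<noteq> 0"
  shows "(r, \<psi>) \<in> equilibria V Go l \<longleftrightarrow>
           r > 0 \<and> 1 / r = (Go / V) * exp (- r / l) \<and> \<psi> \<in> {pi/2, - pi/2}"
proof -
  have angle: "- pi < \<psi> \<and> \<psi> \<le> pi \<and> cos \<psi> = 0 \<longleftrightarrow> \<psi> \<in> {pi/2, - pi/2}"
  proof
    assume half_pi: "\<psi> \<in> {pi/2, - pi/2}"
    then have "- pi < \<psi> \<and> \<psi> \<le> pi" using pi_gt_zero by (elim insertE emptyE) linarith+
    with half_pi cos_eq_0_iff_half_pi show "- pi < \<psi> \<and> \<psi> \<le> pi \<and> cos \<psi> = 0" by blast
  qed (use cos_eq_0_iff_half_pi in blast)
  have "cos \<psi> = 0 \<Longrightarrow> sin \<psi> \<noteq> 0"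
    using sin_cos_squared_add[of \<psi>] by auto
  with angle assms show ?thesis
    unfolding equilibria_def rdot_def psidot_def by auto
qed

lemma equilibrium_radius_iff:
  fixes V Go l r :: real
  assumes "V > 0" "Go > 0" "l > 0"
  shows "r > 0 \<and> 1 / r = (Go / V) * exp (- r / l) \<longleftrightarrow> (- r / l) * exp (- r / l) = - (V / Go) / l"
proof
  assume e: "(- r / l) * exp (- r / l) = - (V / Go) / l"
  then have "0 < (r / l) * exp (- r / l)" using assms by simp
  then have "r > 0" using assms by (simp add: zero_less_mult_iff zero_less_divide_iff)
  with e assms show "r > 0 \<and> 1 / r = (Go / V) * exp (- r / l)" by (auto simp: field_simps)
qed (use assms in \<open>auto simp: field_simps\<close>)

lemma equilibria_eq:
  fixes V Go l :: real
  assumes "V > 0" "Go > 0" "l > 0"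
  shows "equilibria V Go l = (\<lambda>w. - l * w) ` {w. w * exp w = - (V / Go) / l} \<times> {pi/2, - pi/2}"
proof (intro set_eqI)
  fix p :: "real \<times> real"
  obtain r \<psi> where p: "p = (r, \<psi>)" by fastforce
  have "V \<noteq> 0" using assms by simp
  have radius: "r \<in> (\<lambda>w. - l * w) ` {w. w * exp w = - (V / Go) / l} \<longleftrightarrow>
                 (- r / l) * exp (- r / l) = - (V / Go) / l"
  proof
    assume "(- r / l) * exp (- r / l) = - (V / Go) / l"
    moreover have "r = - l * (- r / l)" using assms by simp
    ultimately show "r \<in> (\<lambda>w. - l * w) ` {w. w * exp w = - (V / Go) / l}" by blast
  qed (use assms in auto)
  have "p \<in> equilibria V Go l \<longleftrightarrow>
          (- r / l) * exp (- r / l) = - (V / Go) / l \<and> \<psi> \<in> {pi/2, - pi/2}"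
    unfolding p mem_equilibria_iff[OF \<open>V \<noteq> 0\<close>] using equilibrium_radius_iff[OF assms, of r] by blast
  also have "\<dots> \<longleftrightarrow> p \<in> (\<lambda>w. - l * w) ` {w. w * exp w = - (V / Go) / l} \<times> {pi/2, - pi/2}"
    unfolding p using radius by blast
  finally show "p \<in> equilibria V Go l \<longleftrightarrow>
                  p \<in> (\<lambda>w. - l * w) ` {w. w * exp w = - (V / Go) / l} \<times> {pi/2, - pi/2}" .
qed

lemma equilibria_above_threshold:
  fixes V Go l :: real
  assumes "V > 0" "Go > 0" "l > 0" "V / Go * exp 1 < l"
  defines "rs \<equiv> - l * LambertWm1 (- (V / Go) / l)" and "rss \<equiv> - l * LambertW0 (- (V / Go) / l)"
  shows "equilibria V Go l = {rs, rss} \<times> {pi/2, - pi/2}" and "rss < l" and "l < rs"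
proof -
  have x: "- exp (-1) < - (V / Go) / l" "- (V / Go) / l < 0"
    using assms(1-4) by (simp_all add: exp_minus field_simps)
  then have "{w. w * exp w = - (V / Go) / l} = {LambertWm1 (- (V / Go) / l), LambertW0 (- (V / Go) / l)}"
    using times_exp_self_eq_iff_LambertW by blast
  then show "equilibria V Go l = {rs, rss} \<times> {pi/2, - pi/2}"
    unfolding equilibria_eq[OF assms(1-3)] rs_def rss_def by simp
  have "l * - LambertW0 (- (V / Go) / l) < l * 1" "l * 1 < l * - LambertWm1 (- (V / Go) / l)"
    using LambertW0_gt[OF x(1)] LambertWm1_less[OF x] assms(3)
    by (intro mult_strict_left_mono; simp)+
  then show "rss < l" "l < rs" unfolding rs_def rss_def by simp_all
qed

lemma equilibria_below_threshold:
  fixes V Go l :: real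
  assumes "V > 0" "Go > 0" "l > 0" "l < V / Go * exp 1"
  shows "equilibria V Go l = {}"
proof -
  have "- (V / Go) / l < - exp (-1)"
    using assms by (simp add: exp_minus field_simps)
  then have "w * exp w \<noteq> - (V / Go) / l" for w
    using times_exp_self_ge[of w] by linarith
  then show ?thesis unfolding equilibria_eq[OF assms(1-3)] by blast
qed

lemma jac_eq:
  assumes "r \<noteq> 0" "l \<noteq> 0"
  shows "jac V Go l r \<psi> =
           (0, V * sin \<psi>,
            (- 1 / r^2 + (Go / V) * exp (- r / l) / l) * V * sin \<psi>,
            (1 / r - (Go / V) * exp (- r / l)) * V * cos \<psi>)"
proof -
  have rdot_psi: "((\<lambda>y. rdot V r y) has_real_derivative V * sin \<psi>) (at \<psi>)"
    unfolding rdot_def by (auto intro!: derivative_eq_intros)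
  have psidot_r: "((\<lambda>x. psidot V Go l x \<psi>) has_real_derivative
                   (- 1 / r^2 + (Go / V) * exp (- r / l) / l) * V * sin \<psi>) (at r)"
    unfolding psidot_def using assms
    by (auto intro!: derivative_eq_intros simp: field_simps power2_eq_square)
  have psidot_psi: "((\<lambda>y. psidot V Go l r y) has_real_derivative
                   (1 / r - (Go / V) * exp (- r / l)) * V * cos \<psi>) (at \<psi>)"
    unfolding psidot_def by (auto intro!: derivative_eq_intros)
  show ?thesis
    unfolding jac_def rdot_psi[THEN DERIV_imp_deriv] psidot_r[THEN DERIV_imp_deriv]
      psidot_psi[THEN DERIV_imp_deriv]
    by (simp add: rdot_def)
qed

lemma lin_eigenvalues_at_equilibrium:
  assumes "V > 0" "l > 0" "(r, \<psi>) \<in> equilibria V Go l"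
  shows "lin_eigenvalues V Go l r \<psi> = {z. z^2 = of_real (V^2 * (r - l) / (r^2 * l))}"
proof -
  have r: "r > 0" "(Go / V) * exp (- r / l) = 1 / r" and half_pi: "\<psi> \<in> {pi/2, - pi/2}"
    using assms mem_equilibria_iff[of V r \<psi> Go l] by auto
  then have "cos \<psi> = 0" "sin \<psi> * sin \<psi> = 1" by (elim insertE emptyE; hypsubst; simp)+
  define c where "c = (- 1 / r^2 + (Go / V) * exp (- r / l) / l) * V * sin \<psi>"
  have "jac V Go l r \<psi> = (0, V * sin \<psi>, c, 0)"
    using jac_eq[of r l] r(1) assms(2) \<open>cos \<psi> = 0\<close> unfolding c_def by simp
  then have "lin_eigenvalues V Go l r \<psi> = {z. z^2 = of_real (V * sin \<psi> * c)}"
    unfolding lin_eigenvalues_def by (simp add: power2_eq_square)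
  also have "V * sin \<psi> * c = V^2 * (r - l) / (r^2 * l)"
    unfolding c_def r(2) using \<open>sin \<psi> * sin \<psi> = 1\<close> assms r(1)
    by (simp add: field_simps power2_eq_square)
  finally show ?thesis .
qed

lemma square_roots_of_real_pos:
  assumes "k > 0"
  shows "{z::complex. z^2 = of_real k} = {of_real (- sqrt k), of_real (sqrt k)}"
proof -
  have "of_real k = (of_real (sqrt k) :: complex)^2"
    using assms by (simp flip: of_real_power)
  then show ?thesis by (auto simp: power2_eq_iff)
qed

lemma square_roots_of_real_neg:
  assumes "k < 0"
  shows "{z::complex. z^2 = of_real k} = {\<i> * of_real (sqrt (- k)), - \<i> * of_real (sqrt (- k))}"
proof -
  have "of_real k = (\<i> * of_real (sqrt (- k)))^2"
    using assms by (simp add: power_mult_distrib flip: of_real_power)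
  then show ?thesis by (auto simp: power2_eq_iff)
qed

lemma lin_eigenvalues_saddle:
  assumes "V > 0" "l > 0" "(r, \<psi>) \<in> equilibria V Go l" "l < r"
  shows "\<exists>a b::real. a < 0 \<and> 0 < b \<and> lin_eigenvalues V Go l r \<psi> = {of_real a, of_real b}"
proof -
  define k where "k = V^2 * (r - l) / (r^2 * l)"
  have "k > 0" unfolding k_def using assms by simp
  then have "- sqrt k < 0" "0 < sqrt k" by simp_all
  moreover have "lin_eigenvalues V Go l r \<psi> = {of_real (- sqrt k), of_real (sqrt k)}"
    unfolding lin_eigenvalues_at_equilibrium[OF assms(1-3), folded k_def]
    by (rule square_roots_of_real_pos[OF \<open>k > 0\<close>])
  ultimately show ?thesis by blast
qed

lemma lin_eigenvalues_center:
  assumes "V > 0" "l > 0" "(r, \<psi>) \<in> equilibria V Go l" "r < l"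
  shows "\<exists>\<omega>::real. \<omega> \<noteq> 0 \<and> lin_eigenvalues V Go l r \<psi> = {\<i> * of_real \<omega>, - \<i> * of_real \<omega>}"
proof -
  define k where "k = V^2 * (r - l) / (r^2 * l)"
  have "r > 0" using assms mem_equilibria_iff[of V r \<psi> Go l] by simp
  then have "k < 0" unfolding k_def using assms by (simp add: divide_neg_pos mult_pos_neg)
  then have "sqrt (- k) \<noteq> 0" by simp
  moreover have "lin_eigenvalues V Go l r \<psi> = {\<i> * of_real (sqrt (- k)), - \<i> * of_real (sqrt (- k))}"
    unfolding lin_eigenvalues_at_equilibrium[OF assms(1-3), folded k_def]
    by (rule square_roots_of_real_neg[OF \<open>k < 0\<close>])
  ultimately show ?thesis by blast
qed

lemma four_equilibria_saddle_center:
  assumes "V > 0" "l > 0" "equilibria V Go l = {rs, rss} \<times> {pi/2, - pi/2}" "rss < l" "l < rs"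
  shows "equilibria V Go l = {(rs, pi/2), (rs, - pi/2), (rss, pi/2), (rss, - pi/2)}"
    and "card (equilibria V Go l) = 4"
    and "\<psi> \<in> {pi/2, - pi/2} \<Longrightarrow>
           \<exists>a b::real. a < 0 \<and> 0 < b \<and> lin_eigenvalues V Go l rs \<psi> = {of_real a, of_real b}"
    and "\<psi> \<in> {pi/2, - pi/2} \<Longrightarrow>
           \<exists>\<omega>::real. \<omega> \<noteq> 0 \<and> lin_eigenvalues V Go l rss \<psi> = {\<i> * of_real \<omega>, - \<i> * of_real \<omega>}"
proof -
  show set: "equilibria V Go l = {(rs, pi/2), (rs, - pi/2), (rss, pi/2), (rss, - pi/2)}"
    unfolding assms(3) by auto
  have "rs \<noteq> rss" "pi/2 \<noteq> - pi/2" using assms(4,5) by simp_all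
  then show "card (equilibria V Go l) = 4" unfolding set by simp
  assume "\<psi> \<in> {pi/2, - pi/2}"
  then have "(rs, \<psi>) \<in> equilibria V Go l" "(rss, \<psi>) \<in> equilibria V Go l"
    unfolding assms(3) by auto
  then show "\<exists>a b::real. a < 0 \<and> 0 < b \<and> lin_eigenvalues V Go l rs \<psi> = {of_real a, of_real b}"
    and "\<exists>\<omega>::real. \<omega> \<noteq> 0 \<and> lin_eigenvalues V Go l rss \<psi> = {\<i> * of_real \<omega>, - \<i> * of_real \<omega>}"
    using lin_eigenvalues_saddle[OF assms(1,2)] lin_eigenvalues_center[OF assms(1,2)] assms(4,5)
    by blast+
qed

theorem mainTheorem2:
  fixes V Go l :: real
  assumes "V > 0" and "Go > 0" and "l > 0"
  defines "\<rho> \<equiv> V / Go"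
  shows "(l > \<rho> * exp 1 \<longrightarrow>
           (let rs = - l * LambertWm1 (- \<rho> / l); rss = - l * LambertW0 (- \<rho> / l) in
              equilibria V Go l = {(rs, pi/2), (rs, - pi/2), (rss, pi/2), (rss, - pi/2)}
            \<and> card (equilibria V Go l) = 4
            \<and> (\<forall>\<psi>\<in>{pi/2, - pi/2}.
                 (\<exists>a b::real. a < 0 \<and> 0 < b \<and>
                    lin_eigenvalues V Go l rs \<psi> = {complex_of_real a, complex_of_real b})
               \<and> (\<exists>\<omega>::real. \<omega> \<noteq> 0 \<and>
                    lin_eigenvalues V Go l rss \<psi> = {\<i> * complex_of_real \<omega>, - \<i> * complex_of_real \<omega>}))))
       \<and> (l < \<rho> * exp 1 \<longrightarrow> equilibria V Go l = {})"
proof -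
  note classification =
    four_equilibria_saddle_center[OF assms(1,3) equilibria_above_threshold[OF assms(1-3)]]
  show ?thesis
    unfolding Let_def \<rho>_def
    using classification equilibria_below_threshold[OF assms(1-3)] by blast
qed

end
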